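(* Let $M\ge1000$ and let $(r_1,s_1),\dots,(r_M,s_M)$ be $M$ different points of $[0,1]^2$ such that the sets $\{(r_j,s_j)\}$, $1\le j\le M$, are $\nu$-transverse for some $\nu>0$. For $j=1,\dots,M$ let $\pi^{(l)}_j$ be the orthogonal projection of $\mathbb{R}^9$ onto $W^{(l)}(r_j,s_j)$. Then for every linear subspace $V\subset\mathbb{R}^9$, $\dim(V)\le\frac{9}{2M}\sum_{j=1}^M\dim(\pi^{(1)}_j(V))$ and $\dim(V)\le\frac{9}{5M}\sum_{j=1}^M\dim(\pi^{(2)}_j(V))$.
   Context: $\Phi(r,s)=(r,s,r^2,rs,s^2,r^3,r^2s,rs^2,s^3)\in\mathbb{R}^9$. $W^{(1)}(r,s)=\langle\Phi_r(r,s),\Phi_s(r,s)\rangle$ and $W^{(2)}(r,s)=\langle\Phi_r,\Phi_s,\Phi_{rr},\Phi_{rs},\Phi_{ss}\rangle(r,s)$ (spans of partial derivatives). For a polynomial $P(r,s)$, $\|P\|$ is the $\ell^1$ sum of its coefficients. With $M\ge1000$, sets $S_1,\dots,S_M\subset[0,1]^2$ are $\nu$-transverse if for every polynomial $P$ with $\deg P\le100$ and $\|P\|=1$ and every choice of $\frac M{100}$ different sets $S_{i_1},\dots,S_{i_{M/100}}$ there is at least one $S_{i_j}$ with $|P(r,s)|\ge\nu$ for all $(r,s)\in S_{i_j}$. *)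

theory Defs
  imports "HOL-Analysis.Analysis"
begin

definition Phi :: "real \<Rightarrow> real \<Rightarrow> real^9" where
  "Phi r s = vector ([r, s, r^2, r * s, s^2, r^3, r^2 * s, r * s^2, s^3] :: real list)"

definition Phi_r :: "real \<Rightarrow> real \<Rightarrow> real^9" where
  "Phi_r r s = vector_derivative (\<lambda>t. Phi t s) (at r)"
definition Phi_s :: "real \<Rightarrow> real \<Rightarrow> real^9" where
  "Phi_s r s = vector_derivative (\<lambda>t. Phi r t) (at s)"
definition Phi_rr :: "real \<Rightarrow> real \<Rightarrow> real^9" where
  "Phi_rr r s = vector_derivative (\<lambda>t. Phi_r t s) (at r)"
definition Phi_rs :: "real \<Rightarrow> real \<Rightarrow> real^9" where
  "Phi_rs r s = vector_derivative (\<lambda>t. Phi_r r t) (at s)"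
definition Phi_ss :: "real \<Rightarrow> real \<Rightarrow> real^9" where
  "Phi_ss r s = vector_derivative (\<lambda>t. Phi_s r t) (at s)"

definition W1 :: "real \<Rightarrow> real \<Rightarrow> (real^9) set" where
  "W1 r s = span {Phi_r r s, Phi_s r s}"
definition W2 :: "real \<Rightarrow> real \<Rightarrow> (real^9) set" where
  "W2 r s = span {Phi_r r s, Phi_s r s, Phi_rr r s, Phi_rs r s, Phi_ss r s}"

definition orth_proj :: "(real^9) set \<Rightarrow> real^9 \<Rightarrow> real^9" where
  "orth_proj W x = (THE y. y \<in> W \<and> (\<forall>w\<in>W. orthogonal (x - y) w))"

text \<open>A polynomial P(r,s) of degree at most 100 is given by its coefficient
  function c, with c i j the coefficient of r^i s^j and c i j = 0 for i + j > 100.\<close>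
definition deg_le_100 :: "(nat \<Rightarrow> nat \<Rightarrow> real) \<Rightarrow> bool" where
  "deg_le_100 c \<longleftrightarrow> (\<forall>i j. 100 < i + j \<longrightarrow> c i j = 0)"
definition poly2 :: "(nat \<Rightarrow> nat \<Rightarrow> real) \<Rightarrow> real \<Rightarrow> real \<Rightarrow> real" where
  "poly2 c r s = (\<Sum>i\<le>100. \<Sum>j\<le>100. c i j * r^i * s^j)"
definition poly2_norm :: "(nat \<Rightarrow> nat \<Rightarrow> real) \<Rightarrow> real" where
  "poly2_norm c = (\<Sum>i\<le>100. \<Sum>j\<le>100. \<bar>c i j\<bar>)"

definition transverse :: "nat \<Rightarrow> real \<Rightarrow> (nat \<Rightarrow> (real \<times> real) set) \<Rightarrow> bool" where
  "transverse M \<nu> S \<longleftrightarrow>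
     (\<forall>c. deg_le_100 c \<and> poly2_norm c = 1 \<longrightarrow>
        (\<forall>I. I \<subseteq> {..<M} \<and> card I = nat \<lceil>real M / 100\<rceil> \<longrightarrow>
           (\<exists>j\<in>I. \<forall>(r, s)\<in>S j. \<bar>poly2 c r s\<bar> \<ge> \<nu>)))"

end

theory Submission
  imports Defs "HOL-Computational_Algebra.Polynomial"
begin

text \<open>The coordinates of \<Phi> are monomials, so for fixed v the inner product of v with a
  derivative of \<Phi> at p is a polynomial in p. Fix derivative orders \<alpha>_1, ..., \<alpha>_n
  (n = 2 for W1, n = 5 for W2) and monomials \<sigma>_1, ..., \<sigma>_n, and take vectors u_j with
  leading entry at \<sigma>_j for the monomial order of weight a + 10 b: vectors of V where V has
  such a leading entry, unit vectors otherwise. The determinant of the matrix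
  (\<langle>\<partial>^(\<alpha>_k) \<Phi>(p), u_j\<rangle>) is a polynomial of degree at most 6 n \<le> 48 in p. Along the curve
  (t, t^10), t \<rightarrow> 0, it is dominated by the determinant of the coefficients of the monomials
  \<sigma>_j in the \<partial>^(\<alpha>_k) \<Phi>, and finite certificates show that \<sigma> can be chosen so that this
  is nonzero while \<rho> of the u_j lie in V. By transversality the polynomial vanishes at fewer
  than M/100 of the points, and at all other points the projection of V onto the span of the
  \<partial>^(\<alpha>_k) \<Phi> has dimension at least \<rho>; summing gives \<rho> 99 M / 100 \<le> \<Sum>_j dim \<pi>_j(V).
  The certificates achieve 100 n dim V \<le> 9 * 99 \<rho>, which is the claimed bound.\<close>

lemma exhaust_9:
  fixes x :: 9
  shows "x = 1 \<or> x = 2 \<or> x = 3 \<or> x = 4 \<or> x = 5 \<or> x = 6 \<or> x = 7 \<or> x = 8 \<or> x = 9"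
proof (induct x)
  case (of_int z)
  then have "z = 0 \<or> z = 1 \<or> z = 2 \<or> z = 3 \<or> z = 4 \<or> z = 5 \<or> z = 6 \<or> z = 7 \<or> z = 8"
    by fastforce
  then show ?case by auto
qed

lemma forall_9: "(\<forall>i::9. P i) \<longleftrightarrow> P 1 \<and> P 2 \<and> P 3 \<and> P 4 \<and> P 5 \<and> P 6 \<and> P 7 \<and> P 8 \<and> P 9"
  by (metis exhaust_9)

lemma UNIV_9: "(UNIV::9 set) = {1, 2, 3, 4, 5, 6, 7, 8, 9}"
  using exhaust_9 by blast

lemma exhaust_5:
  fixes x :: 5
  shows "x = 1 \<or> x = 2 \<or> x = 3 \<or> x = 4 \<or> x = 5"
proof (induct x)
  case (of_int z)
  then have "z = 0 \<or> z = 1 \<or> z = 2 \<or> z = 3 \<or> z = 4" by fastforce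
  then show ?case by auto
qed

lemma UNIV_5: "(UNIV::5 set) = {1, 2, 3, 4, 5}"
  using exhaust_5 by blast

lemma distinct_5:
  "(1::5) \<noteq> 2" "(1::5) \<noteq> 3" "(1::5) \<noteq> 4" "(1::5) \<noteq> 5" "(2::5) \<noteq> 3" "(2::5) \<noteq> 4"
  "(2::5) \<noteq> 5" "(3::5) \<noteq> 4" "(3::5) \<noteq> 5" "(4::5) \<noteq> 5"
  by simp_all

text \<open>Coordinate i of \<Phi> r s is the monomial r ^ exp_r i * s ^ exp_s i.\<close>

definition exp_r :: "9 \<Rightarrow> nat" where "exp_r i = (vector [1, 0, 2, 1, 0, 3, 2, 1, 0] :: nat^9) $ i"
definition exp_s :: "9 \<Rightarrow> nat" where "exp_s i = (vector [0, 1, 0, 1, 2, 0, 1, 2, 3] :: nat^9) $ i"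

lemma exp_r_simps:
  "exp_r 1 = 1" "exp_r 2 = 0" "exp_r 3 = 2" "exp_r 4 = 1" "exp_r 5 = 0"
  "exp_r 6 = 3" "exp_r 7 = 2" "exp_r 8 = 1" "exp_r 9 = 0"
  by (simp_all add: exp_r_def vector_def)

lemma exp_s_simps:
  "exp_s 1 = 0" "exp_s 2 = 1" "exp_s 3 = 0" "exp_s 4 = 1" "exp_s 5 = 2"
  "exp_s 6 = 0" "exp_s 7 = 1" "exp_s 8 = 2" "exp_s 9 = 3"
  by (simp_all add: exp_s_def vector_def)

lemma exp_r_le_3: "exp_r i \<le> 3" and exp_s_le_3: "exp_s i \<le> 3"
  using exhaust_9[of i] by (auto simp: exp_r_simps exp_s_simps)

fun falling_fact :: "nat \<Rightarrow> nat \<Rightarrow> real" where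
  "falling_fact n 0 = 1"
| "falling_fact n (Suc k) = falling_fact n k * (real n - real k)"

lemma falling_fact_eq_0: "n < k \<Longrightarrow> falling_fact n k = 0"
proof (induct k)
  case (Suc k)
  then show ?case by (cases "n = k") auto
qed simp

lemma falling_fact_Suc_monomial:
  "falling_fact e a * (real (e - a) * x ^ (e - a - 1)) = falling_fact e (Suc a) * x ^ (e - Suc a)"
proof (cases "a \<le> e")
  case True
  then show ?thesis by simp
next
  case False
  then show ?thesis by (simp add: falling_fact_eq_0)
qed

text \<open>Phi_deriv (a, b) (r, s) is the derivative \<partial>_r^a \<partial>_s^b \<Phi> at (r, s).\<close>

definition Phi_deriv :: "nat \<times> nat \<Rightarrow> real \<times> real \<Rightarrow> real^9" where
  "Phi_deriv \<alpha> p = (\<chi> i. falling_fact (exp_r i) (fst \<alpha>) * falling_fact (exp_s i) (snd \<alpha>)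
      * fst p ^ (exp_r i - fst \<alpha>) * snd p ^ (exp_s i - snd \<alpha>))"

lemma has_vector_derivative_componentwise:
  fixes f :: "real \<Rightarrow> real^'n"
  assumes "\<And>i. ((\<lambda>x. f x $ i) has_real_derivative (f' $ i)) (at x)"
  shows "(f has_vector_derivative f') (at x)"
proof -
  have basis: "(\<Sum>i\<in>UNIV. (y $ i) *\<^sub>R axis i 1) = y" for y :: "real^'n"
    by (simp add: vec_eq_iff axis_def if_distrib cong: if_cong)
  have "((\<lambda>x. \<Sum>i\<in>UNIV. (f x $ i) *\<^sub>R axis i 1) has_vector_derivative
      (\<Sum>i\<in>UNIV. (f' $ i) *\<^sub>R axis i (1::real))) (at x)"
  proof (rule has_vector_derivative_sum)
    fix i
    show "((\<lambda>x. (f x $ i) *\<^sub>R axis i 1) has_vector_derivative (f' $ i) *\<^sub>R axis i 1) (at x)"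
      using has_vector_derivative_scaleR[OF assms has_vector_derivative_const] by simp
  qed
  then show ?thesis
    by (simp only: basis)
qed

lemma Phi_deriv_has_derivative_r:
  "((\<lambda>t. Phi_deriv (a, b) (t, s)) has_vector_derivative Phi_deriv (Suc a, b) (r, s)) (at r)"
proof (rule has_vector_derivative_componentwise)
  fix i
  define c where "c = falling_fact (exp_s i) b * s ^ (exp_s i - b) * falling_fact (exp_r i) a"
  have "(\<lambda>t. Phi_deriv (a, b) (t, s) $ i) = (\<lambda>t. c * t ^ (exp_r i - a))"
    by (simp add: Phi_deriv_def c_def mult_ac)
  moreover have "Phi_deriv (Suc a, b) (r, s) $ i = c * (real (exp_r i - a) * r ^ (exp_r i - a - 1))"
  proof -
    have "Phi_deriv (Suc a, b) (r, s) $ i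
        = falling_fact (exp_s i) b * s ^ (exp_s i - b) * (falling_fact (exp_r i) (Suc a) * r ^ (exp_r i - Suc a))"
      by (simp add: Phi_deriv_def mult_ac del: falling_fact.simps)
    then show ?thesis
      by (simp add: falling_fact_Suc_monomial[symmetric] c_def mult_ac del: falling_fact.simps)
  qed
  ultimately show "((\<lambda>t. Phi_deriv (a, b) (t, s) $ i) has_real_derivative Phi_deriv (Suc a, b) (r, s) $ i) (at r)"
    by (simp only:) (auto intro!: derivative_eq_intros)
qed

lemma Phi_deriv_has_derivative_s:
  "((\<lambda>t. Phi_deriv (a, b) (r, t)) has_vector_derivative Phi_deriv (a, Suc b) (r, s)) (at s)"
proof (rule has_vector_derivative_componentwise)
  fix i
  define c where "c = falling_fact (exp_r i) a * r ^ (exp_r i - a) * falling_fact (exp_s i) b"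
  have "(\<lambda>t. Phi_deriv (a, b) (r, t) $ i) = (\<lambda>t. c * t ^ (exp_s i - b))"
    by (simp add: Phi_deriv_def c_def mult_ac)
  moreover have "Phi_deriv (a, Suc b) (r, s) $ i = c * (real (exp_s i - b) * s ^ (exp_s i - b - 1))"
  proof -
    have "Phi_deriv (a, Suc b) (r, s) $ i
        = falling_fact (exp_r i) a * r ^ (exp_r i - a) * (falling_fact (exp_s i) (Suc b) * s ^ (exp_s i - Suc b))"
      by (simp add: Phi_deriv_def mult_ac del: falling_fact.simps)
    then show ?thesis
      by (simp add: falling_fact_Suc_monomial[symmetric] c_def mult_ac del: falling_fact.simps)
  qed
  ultimately show "((\<lambda>t. Phi_deriv (a, b) (r, t) $ i) has_real_derivative Phi_deriv (a, Suc b) (r, s) $ i) (at s)"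
    by (simp only:) (auto intro!: derivative_eq_intros)
qed

lemma Phi_eq_Phi_deriv: "Phi r s = Phi_deriv (0, 0) (r, s)"
  unfolding vec_eq_iff forall_9
  by (simp add: Phi_def Phi_deriv_def exp_r_simps exp_s_simps vector_def power2_eq_square power3_eq_cube)

lemma Phi_r_eq_Phi_deriv: "Phi_r r s = Phi_deriv (1, 0) (r, s)"
  unfolding Phi_r_def Phi_eq_Phi_deriv
  using Phi_deriv_has_derivative_r[of 0 0 s r] by (simp add: vector_derivative_at)

lemma Phi_s_eq_Phi_deriv: "Phi_s r s = Phi_deriv (0, 1) (r, s)"
  unfolding Phi_s_def Phi_eq_Phi_deriv
  using Phi_deriv_has_derivative_s[of 0 0 r s] by (simp add: vector_derivative_at)

lemma Phi_rr_eq_Phi_deriv: "Phi_rr r s = Phi_deriv (2, 0) (r, s)"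
  unfolding Phi_rr_def Phi_r_eq_Phi_deriv
  using Phi_deriv_has_derivative_r[of 1 0 s r] by (simp add: vector_derivative_at numeral_2_eq_2)

lemma Phi_rs_eq_Phi_deriv: "Phi_rs r s = Phi_deriv (1, 1) (r, s)"
  unfolding Phi_rs_def Phi_r_eq_Phi_deriv
  using Phi_deriv_has_derivative_s[of 1 0 r s] by (simp add: vector_derivative_at)

lemma Phi_ss_eq_Phi_deriv: "Phi_ss r s = Phi_deriv (0, 2) (r, s)"
  unfolding Phi_ss_def Phi_s_eq_Phi_deriv
  using Phi_deriv_has_derivative_s[of 0 1 r s] by (simp add: vector_derivative_at numeral_2_eq_2)

text \<open>Q is a polynomial in b whose coefficients are polynomials in a.\<close>

definition bipoly :: "nat \<Rightarrow> (real \<Rightarrow> real \<Rightarrow> real) \<Rightarrow> bool" where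
  "bipoly N f \<longleftrightarrow> (\<exists>Q :: real poly poly. degree Q \<le> N \<and> (\<forall>i. degree (coeff Q i) \<le> N) \<and>
      (\<forall>a b. f a b = poly (poly Q [:b:]) a))"

lemma bipoly_mono: "bipoly N f \<Longrightarrow> N \<le> K \<Longrightarrow> bipoly K f"
  unfolding bipoly_def by (meson order_trans)

lemma bipoly_const: "bipoly 0 (\<lambda>a b. c)"
  unfolding bipoly_def by (rule exI[of _ "[:[:c:]:]"]) (auto simp: coeff_pCons split: nat.split)

lemma bipoly_fst: "bipoly 1 (\<lambda>a b. a)"
  unfolding bipoly_def by (rule exI[of _ "[:[:0, 1:]:]"]) (auto simp: coeff_pCons split: nat.split)

lemma bipoly_snd: "bipoly 1 (\<lambda>a b. b)"
  unfolding bipoly_def by (rule exI[of _ "[:0, 1:]"]) (auto simp: coeff_pCons split: nat.split)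

lemma bipoly_add: "bipoly N f \<Longrightarrow> bipoly N g \<Longrightarrow> bipoly N (\<lambda>a b. f a b + g a b)"
  unfolding bipoly_def
proof (elim exE conjE)
  fix Q R :: "real poly poly"
  assume "degree Q \<le> N" "\<forall>i. degree (coeff Q i) \<le> N" "\<forall>a b. f a b = poly (poly Q [:b:]) a"
    "degree R \<le> N" "\<forall>i. degree (coeff R i) \<le> N" "\<forall>a b. g a b = poly (poly R [:b:]) a"
  then show "\<exists>Q. degree Q \<le> N \<and> (\<forall>i. degree (coeff Q i) \<le> N) \<and>
      (\<forall>a b. f a b + g a b = poly (poly Q [:b:]) a)"
    by (intro exI[of _ "Q + R"]) (auto intro: degree_add_le)
qed

lemma bipoly_mult: "bipoly N f \<Longrightarrow> bipoly K g \<Longrightarrow> bipoly (N + K) (\<lambda>a b. f a b * g a b)"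
  unfolding bipoly_def
proof (elim exE conjE)
  fix Q R :: "real poly poly"
  assume QR: "degree Q \<le> N" "\<forall>i. degree (coeff Q i) \<le> N" "\<forall>a b. f a b = poly (poly Q [:b:]) a"
    "degree R \<le> K" "\<forall>i. degree (coeff R i) \<le> K" "\<forall>a b. g a b = poly (poly R [:b:]) a"
  have "degree (Q * R) \<le> N + K"
    using QR by (meson add_mono degree_mult_le order_trans)
  moreover have "degree (coeff (Q * R) i) \<le> N + K" for i
    unfolding coeff_mult
  proof (rule degree_sum_le)
    fix p
    show "degree (coeff Q p * coeff R (i - p)) \<le> N + K"
      using QR by (meson add_mono degree_mult_le order_trans)
  qed simp
  ultimately show "\<exists>Q. degree Q \<le> N + K \<and> (\<forall>i. degree (coeff Q i) \<le> N + K) \<and>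
      (\<forall>a b. f a b * g a b = poly (poly Q [:b:]) a)"
    using QR by (intro exI[of _ "Q * R"]) simp
qed

lemma bipoly_sum:
  "finite S \<Longrightarrow> (\<And>i. i \<in> S \<Longrightarrow> bipoly N (f i)) \<Longrightarrow> bipoly N (\<lambda>a b. \<Sum>i\<in>S. f i a b)"
proof (induct S rule: finite_induct)
  case empty
  then show ?case using bipoly_mono[OF bipoly_const[of 0]] by simp
next
  case (insert x F)
  then show ?case using bipoly_add[of N "f x" "\<lambda>a b. \<Sum>i\<in>F. f i a b"] by simp
qed

lemma bipoly_prod:
  "finite S \<Longrightarrow> (\<And>i. i \<in> S \<Longrightarrow> bipoly N (f i)) \<Longrightarrow> bipoly (N * card S) (\<lambda>a b. \<Prod>i\<in>S. f i a b)"
proof (induct S rule: finite_induct)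
  case empty
  then show ?case using bipoly_const[of 1] by simp
next
  case (insert x F)
  then have "bipoly (N + N * card F) (\<lambda>a b. f x a b * (\<Prod>i\<in>F. f i a b))"
    by (intro bipoly_mult) auto
  then show ?case using insert by simp
qed

lemma bipoly_power: "bipoly N f \<Longrightarrow> bipoly (N * n) (\<lambda>a b. f a b ^ n)"
proof (induct n)
  case 0
  then show ?case using bipoly_const[of 1] by simp
next
  case (Suc n)
  then show ?case using bipoly_mult[of N f "N * n" "\<lambda>a b. f a b ^ n"] by (simp add: add.commute)
qed

lemma double_sum_atMost_shrink:
  fixes c :: "nat \<Rightarrow> nat \<Rightarrow> real"
  assumes "N \<le> K" "\<And>i j. c i j \<noteq> 0 \<Longrightarrow> i \<le> N \<and> j \<le> N"
  shows "(\<Sum>i\<le>K. \<Sum>j\<le>K. c i j) = (\<Sum>i\<le>N. \<Sum>j\<le>N. c i j)"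
proof -
  have "(\<Sum>i\<le>K. \<Sum>j\<le>K. c i j) = (\<Sum>i\<le>K. \<Sum>j\<le>N. c i j)"
    by (rule sum.cong[OF refl], rule sum.mono_neutral_right) (use assms in auto)
  also have "\<dots> = (\<Sum>i\<le>N. \<Sum>j\<le>N. c i j)"
    by (rule sum.mono_neutral_right)
      (use assms in \<open>auto elim: sum.not_neutral_contains_not_neutral\<close>)
  finally show ?thesis .
qed

lemma bipoly_imp_poly2:
  assumes "bipoly N f" "2 * N \<le> 100"
  obtains c where "deg_le_100 c" "\<And>a b. poly2 c a b = f a b"
proof -
  obtain Q :: "real poly poly" where Q: "degree Q \<le> N" "\<forall>i. degree (coeff Q i) \<le> N"
      "\<forall>a b. f a b = poly (poly Q [:b:]) a"
    using assms(1) unfolding bipoly_def by blast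
  define c where "c i j = coeff (coeff Q j) i" for i j
  have support: "i \<le> N \<and> j \<le> N" if "c i j \<noteq> 0" for i j
  proof -
    have "coeff Q j \<noteq> 0" "i \<le> degree (coeff Q j)"
      using that unfolding c_def by (auto intro: le_degree)
    then show ?thesis using Q(1,2) by (meson le_degree order_trans)
  qed
  have "deg_le_100 c"
    unfolding deg_le_100_def using support assms(2) by fastforce
  moreover have "poly2 c a b = f a b" for a b
  proof -
    have "poly Q [:b:] = (\<Sum>j\<le>N. coeff Q j * [:b:] ^ j)"
      unfolding poly_altdef by (rule sum.mono_neutral_left) (use Q(1) in \<open>auto simp: coeff_eq_0\<close>)
    then have "f a b = (\<Sum>j\<le>N. poly (coeff Q j) a * b ^ j)"
      using Q(3) by (simp add: poly_sum)
    also have "\<dots> = (\<Sum>j\<le>N. \<Sum>i\<le>N. c i j * a ^ i * b ^ j)"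
    proof (rule sum.cong[OF refl])
      fix j
      have "poly (coeff Q j) a = (\<Sum>i\<le>N. c i j * a ^ i)"
        unfolding poly_altdef c_def
        by (rule sum.mono_neutral_left) (use Q(2) in \<open>auto simp: coeff_eq_0\<close>)
      then show "poly (coeff Q j) a * b ^ j = (\<Sum>i\<le>N. c i j * a ^ i * b ^ j)"
        by (simp add: sum_distrib_right)
    qed
    also have "\<dots> = (\<Sum>i\<le>N. \<Sum>j\<le>N. c i j * a ^ i * b ^ j)"
      by (rule sum.swap)
    also have "\<dots> = (\<Sum>i\<le>100. \<Sum>j\<le>100. c i j * a ^ i * b ^ j)"
      by (rule double_sum_atMost_shrink[symmetric]) (use support assms(2) in auto)
    finally show ?thesis unfolding poly2_def by simp
  qed
  ultimately show ?thesis using that by blast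
qed

lemma poly2_normalize:
  assumes "deg_le_100 c" "poly2 c a0 b0 \<noteq> 0"
  obtains c' where "deg_le_100 c'" "poly2_norm c' = 1" "\<And>a b. poly2 c' a b = poly2 c a b / poly2_norm c"
proof -
  have "poly2_norm c \<noteq> 0"
  proof
    assume "poly2_norm c = 0"
    then have "\<forall>i\<le>100. \<forall>j\<le>100. c i j = 0"
      unfolding poly2_norm_def by (simp add: sum_nonneg_eq_0_iff)
    then show False
      using assms(2) unfolding poly2_def by simp
  qed
  moreover have "poly2_norm c \<ge> 0"
    unfolding poly2_norm_def by (intro sum_nonneg) auto
  ultimately have norm_pos: "poly2_norm c > 0" by simp
  define c' where "c' i j = c i j / poly2_norm c" for i j
  have "deg_le_100 c'"
    using assms(1) unfolding deg_le_100_def c'_def by simp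
  moreover have "poly2_norm c' = 1"
    using norm_pos unfolding poly2_norm_def c'_def by (simp add: abs_div sum_divide_distrib[symmetric])
  moreover have "poly2 c' a b = poly2 c a b / poly2_norm c" for a b
    unfolding poly2_def c'_def by (simp add: sum_divide_distrib)
  ultimately show ?thesis using that by blast
qed

lemma transverse_card_zeros_less:
  assumes tr: "transverse M \<nu> (\<lambda>j. {p j})" and "\<nu> > 0"
    and "bipoly N f" "2 * N \<le> 100" and "f a0 b0 \<noteq> 0"
  shows "card {j. j < M \<and> f (fst (p j)) (snd (p j)) = 0} < nat \<lceil>real M / 100\<rceil>"
proof (rule ccontr)
  let ?Z = "{j. j < M \<and> f (fst (p j)) (snd (p j)) = 0}"
  assume "\<not> card ?Z < nat \<lceil>real M / 100\<rceil>"
  then obtain I where I: "I \<subseteq> ?Z" "card I = nat \<lceil>real M / 100\<rceil>"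
    by (meson not_less obtain_subset_with_card_n)
  obtain c where c: "deg_le_100 c" "\<And>a b. poly2 c a b = f a b"
    using bipoly_imp_poly2[OF assms(3,4)] by blast
  obtain c' where c': "deg_le_100 c'" "poly2_norm c' = 1"
    "\<And>a b. poly2 c' a b = f a b / poly2_norm c"
    using poly2_normalize[OF c(1)] assms(5) c(2) by metis
  have "I \<subseteq> {..<M}" using I(1) by auto
  then obtain j where "j \<in> I" "\<forall>(r, s)\<in>{p j}. \<bar>poly2 c' r s\<bar> \<ge> \<nu>"
    using tr I(2) c'(1,2) unfolding transverse_def by blast
  then have "\<bar>f (fst (p j)) (snd (p j))\<bar> / \<bar>poly2_norm c\<bar> \<ge> \<nu>" "j \<in> ?Z"
    using I(1) c'(3) by (auto simp: case_prod_beta abs_div)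
  then show False using \<open>\<nu> > 0\<close> by simp
qed

lemma orth_proj_span:
  fixes S :: "(real^9) set"
  shows "orth_proj (span S) x \<in> span S \<and> (\<forall>w\<in>span S. orthogonal (x - orth_proj (span S) x) w)"
proof -
  obtain y z where yz: "y \<in> span S" "\<And>w. w \<in> span S \<Longrightarrow> orthogonal z w" "x = y + z"
    by (rule orthogonal_subspace_decomp_exists[of S x]) blast
  have y: "y \<in> span S \<and> (\<forall>w\<in>span S. orthogonal (x - y) w)"
    using yz by simp
  have unique: "y' = y" if "y' \<in> span S \<and> (\<forall>w\<in>span S. orthogonal (x - y') w)" for y'
  proof -
    have "y - y' \<in> span S" using that yz(1) by (simp add: span_diff)
    then have "inner (x - y') (y - y') = 0" "inner (x - y) (y - y') = 0"
      using that y by (auto simp: orthogonal_def)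
    moreover have "y - y' = (x - y') - (x - y)" by simp
    ultimately have "inner (y - y') (y - y') = 0"
      by (metis diff_zero inner_diff_left)
    then show ?thesis by simp
  qed
  have "orth_proj (span S) x = y"
    unfolding orth_proj_def by (rule the_equality, rule y, rule unique)
  then show ?thesis using y by simp
qed

definition deriv_map :: "('n \<Rightarrow> nat \<times> nat) \<Rightarrow> real \<times> real \<Rightarrow> real^9 \<Rightarrow> real^'n" where
  "deriv_map \<alpha> p v = (\<chi> k. Phi_deriv (\<alpha> k) p \<bullet> v)"

definition deriv_span :: "('n \<Rightarrow> nat \<times> nat) \<Rightarrow> real \<times> real \<Rightarrow> (real^9) set" where
  "deriv_span \<alpha> p = span (range (\<lambda>k. Phi_deriv (\<alpha> k) p))"

lemma linear_deriv_map: "linear (deriv_map \<alpha> p)"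
  by (rule linearI) (simp_all add: deriv_map_def vec_eq_iff inner_add_right)

lemma deriv_map_orth_proj: "deriv_map \<alpha> p (orth_proj (deriv_span \<alpha> p) v) = deriv_map \<alpha> p v"
proof -
  have "\<forall>w\<in>deriv_span \<alpha> p. orthogonal (v - orth_proj (deriv_span \<alpha> p) v) w"
    using orth_proj_span unfolding deriv_span_def by blast
  moreover have "Phi_deriv (\<alpha> k) p \<in> deriv_span \<alpha> p" for k
    unfolding deriv_span_def by (rule span_base) auto
  ultimately have "Phi_deriv (\<alpha> k) p \<bullet> (v - orth_proj (deriv_span \<alpha> p) v) = 0" for k
    by (simp add: orthogonal_def inner_commute)
  then show ?thesis
    by (simp add: deriv_map_def vec_eq_iff inner_diff_right)
qed

lemma dim_deriv_map_image_le: "dim (deriv_map \<alpha> p ` V) \<le> dim (orth_proj (deriv_span \<alpha> p) ` V)"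
proof -
  have "deriv_map \<alpha> p ` V = deriv_map \<alpha> p ` orth_proj (deriv_span \<alpha> p) ` V"
    by (simp add: image_image deriv_map_orth_proj)
  also have "dim \<dots> \<le> dim (orth_proj (deriv_span \<alpha> p) ` V)"
    by (rule dim_image_le[OF linear_deriv_map])
  finally show ?thesis .
qed

definition leading_at :: "('n \<Rightarrow> 'a::linorder) \<Rightarrow> 'n \<Rightarrow> real^'n \<Rightarrow> bool" where
  "leading_at w l u \<longleftrightarrow> u $ l = 1 \<and> (\<forall>m. w m < w l \<longrightarrow> u $ m = 0)"

definition leads :: "('n \<Rightarrow> 'a::linorder) \<Rightarrow> (real^'n) set \<Rightarrow> 'n set" where
  "leads w V = {l. \<exists>u\<in>V. leading_at w l u}"

lemma leading_family_exists:
  fixes \<sigma> :: "'k \<Rightarrow> 'n::finite" and w :: "'n \<Rightarrow> 'a::linorder"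
  obtains u where "\<And>j. leading_at w (\<sigma> j) (u j)" "\<And>j. \<sigma> j \<in> leads w V \<Longrightarrow> u j \<in> V"
proof -
  define u where "u j = (if \<sigma> j \<in> leads w V then SOME v. v \<in> V \<and> leading_at w (\<sigma> j) v
    else axis (\<sigma> j) 1)" for j
  have "leading_at w (\<sigma> j) (u j) \<and> (\<sigma> j \<in> leads w V \<longrightarrow> u j \<in> V)" for j
  proof (cases "\<sigma> j \<in> leads w V")
    case True
    then have "\<exists>v. v \<in> V \<and> leading_at w (\<sigma> j) v"
      unfolding leads_def by blast
    from someI_ex[OF this] show ?thesis
      unfolding u_def using True by simp
  next
    case False
    then show ?thesis
      unfolding u_def leading_at_def by (auto simp: axis_def)
  qed
  then show ?thesis using that by blast
qed

lemma lowest_entry_exists: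
  fixes w :: "'n::finite \<Rightarrow> 'a::linorder" and v :: "real^'n"
  assumes "v \<noteq> 0"
  obtains m where "v $ m \<noteq> 0" "\<And>m'. w m' < w m \<Longrightarrow> v $ m' = 0"
proof -
  define S where "S = {m. v $ m \<noteq> 0}"
  have "w ` S \<noteq> {}"
    using assms by (auto simp: S_def vec_eq_iff)
  then obtain m where "m \<in> S" "w m = Min (w ` S)"
    using Min_in[of "w ` S"] by (metis finite finite_imageI imageE)
  moreover have "v $ m' = 0" if "w m' < w m" for m'
  proof (rule ccontr)
    assume "v $ m' \<noteq> 0"
    then have "Min (w ` S) \<le> w m'"
      by (simp add: S_def)
    then show False
      using that \<open>w m = Min (w ` S)\<close> by simp
  qed
  ultimately show ?thesis
    using that unfolding S_def by blast
qed

text \<open>Induction on the number of positions whose weight is at least that of the lowest nonzero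
  entry; subtracting a multiple of U m clears the lowest entry m and so decreases this number.\<close>

lemma subspace_subset_span_leading:
  fixes w :: "'n::finite \<Rightarrow> 'a::linorder"
  assumes "inj w" "subspace V"
    and U: "\<And>l. l \<in> leads w V \<Longrightarrow> U l \<in> V \<and> leading_at w l (U l)"
  shows "V \<subseteq> span (U ` leads w V)"
proof
  define above where "above v = {m. \<exists>m'. w m' \<le> w m \<and> v $ m' \<noteq> 0}" for v :: "real^'n"
  show "v \<in> span (U ` leads w V)" if "v \<in> V" for v
    using that
  proof (induction "card (above v)" arbitrary: v rule: less_induct)
    case less
    show ?case
    proof (cases "v = 0")
      case False
      then obtain m where m: "v $ m \<noteq> 0" "\<And>m'. w m' < w m \<Longrightarrow> v $ m' = 0"
        by (rule lowest_entry_exists[where w = w]) blast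
      then have "(inverse (v $ m)) *\<^sub>R v \<in> V \<and> leading_at w m ((inverse (v $ m)) *\<^sub>R v)"
        using subspace_scale[OF assms(2) less.prems] by (simp add: leading_at_def)
      then have m_lead: "m \<in> leads w V"
        unfolding leads_def by blast
      define v' where "v' = v - (v $ m) *\<^sub>R U m"
      have "v' \<in> V"
        unfolding v'_def using U[OF m_lead] less.prems assms(2) by (simp add: subspace_diff subspace_scale)
      have v'_higher: "w m < w m'" if "v' $ m' \<noteq> 0" for m'
      proof (rule ccontr)
        assume "\<not> w m < w m'"
        then have "w m' < w m \<or> m' = m"
          using \<open>inj w\<close> by (metis inj_eq not_less_iff_gr_or_eq)
        then have "v' $ m' = 0"
          using m(2) U[OF m_lead] unfolding v'_def leading_at_def by auto
        then show False using that by simp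
      qed
      have "above v' \<subseteq> above v"
        using m(1) v'_higher unfolding above_def by (blast intro: less_imp_le order_trans)
      moreover have "m \<in> above v - above v'"
        using m(1) v'_higher unfolding above_def by (auto simp: not_le[symmetric])
      ultimately have "v' \<in> span (U ` leads w V)"
        using less.hyps \<open>v' \<in> V\<close> by (metis Diff_iff finite psubsetI psubset_card_mono)
      moreover have "U m \<in> span (U ` leads w V)"
        using m_lead by (simp add: span_base)
      ultimately have "v' + (v $ m) *\<^sub>R U m \<in> span (U ` leads w V)"
        by (simp add: span_add span_scale)
      then show ?thesis unfolding v'_def by simp
    qed (simp add: span_zero)
  qed
qed

lemma dim_le_card_leads:
  fixes w :: "'n::finite \<Rightarrow> 'a::linorder"
  assumes "inj w" "subspace V"
  shows "dim V \<le> card (leads w V)"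
proof -
  obtain U where "\<And>l. leading_at w l (U l)" "\<And>l. l \<in> leads w V \<Longrightarrow> U l \<in> V"
    using leading_family_exists[where \<sigma> = id and w = w and V = V] by auto
  then have "dim V \<le> dim (U ` leads w V)"
    using subspace_subset_span_leading[OF assms] by (intro dim_mono) blast
  also have "\<dots> \<le> card (leads w V)"
    by (metis card_image_le dim_le_card' finite finite_imageI order_trans)
  finally show ?thesis .
qed

definition deriv_gram :: "('n \<Rightarrow> nat \<times> nat) \<Rightarrow> ('n \<Rightarrow> real^9) \<Rightarrow> real \<times> real \<Rightarrow> real^'n^'n" where
  "deriv_gram \<alpha> u p = (\<chi> k j. Phi_deriv (\<alpha> k) p \<bullet> u j)"

lemma card_le_dim_deriv_map_image:
  fixes \<alpha> :: "'n::finite \<Rightarrow> nat \<times> nat"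
  assumes "det (deriv_gram \<alpha> u p) \<noteq> 0" "\<And>j. j \<in> C \<Longrightarrow> u j \<in> V" "subspace V"
  shows "card C \<le> dim (deriv_map \<alpha> p ` V)"
proof -
  let ?G = "deriv_gram \<alpha> u p"
  let ?E = "{x::real^'n. \<forall>i. i \<notin> C \<longrightarrow> x $ i = 0}"
  have "inj ((*v) ?G)"
    using assms(1) by (simp add: inj_matrix_vector_mult invertible_det_nz)
  then have "dim ((*v) ?G ` ?E) = dim ?E"
    using dim_image_eq[OF matrix_vector_mul_linear inj_on_subset[OF _ subset_UNIV]] by blast
  also have "dim ?E = card C"
    unfolding dim_vec_eq[symmetric] by (rule dim_substandard_cart)
  finally have "card C = dim ((*v) ?G ` ?E)" ..
  moreover have "(*v) ?G ` ?E \<subseteq> deriv_map \<alpha> p ` V"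
  proof
    fix y assume "y \<in> (*v) ?G ` ?E"
    then obtain x where x: "x \<in> ?E" "y = ?G *v x" by blast
    have "x $ j *\<^sub>R u j \<in> V" for j
      using x(1) assms(2,3) by (cases "j \<in> C") (simp_all add: subspace_scale subspace_0)
    then have "(\<Sum>j\<in>UNIV. x $ j *\<^sub>R u j) \<in> V"
      by (intro subspace_sum[OF assms(3)])
    moreover have "?G *v x = deriv_map \<alpha> p (\<Sum>j\<in>UNIV. x $ j *\<^sub>R u j)"
      by (simp add: vec_eq_iff matrix_vector_mult_def deriv_gram_def deriv_map_def
          inner_sum_right mult.commute)
    ultimately show "y \<in> deriv_map \<alpha> p ` V" using x(2) by blast
  qed
  ultimately show ?thesis by (simp add: dim_subset)
qed

text \<open>Along the curve (t, t ^ 10) the monomial r ^ a * s ^ b has order t ^ (a + 10 * b); as all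
  exponents are below 10, distinct monomials have distinct orders.\<close>

definition weight :: "nat \<times> nat \<Rightarrow> nat" where
  "weight \<alpha> = fst \<alpha> + 10 * snd \<alpha>"

definition monomial_weight :: "9 \<Rightarrow> nat" where
  "monomial_weight i = weight (exp_r i, exp_s i)"

lemma inj_monomial_weight: "inj monomial_weight"
proof (rule injI)
  fix i j :: 9
  assume "monomial_weight i = monomial_weight j"
  then show "i = j"
    using exhaust_9[of i] exhaust_9[of j]
    by (auto simp: monomial_weight_def weight_def exp_r_simps exp_s_simps)
qed

lemma Phi_deriv_on_curve:
  "t ^ weight \<alpha> * Phi_deriv \<alpha> (t, t ^ 10) $ m = t ^ monomial_weight m * Phi_deriv \<alpha> (1, 1) $ m"
proof (cases "fst \<alpha> \<le> exp_r m \<and> snd \<alpha> \<le> exp_s m")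
  case True
  then have "t ^ weight \<alpha> * (t ^ (exp_r m - fst \<alpha>) * (t ^ 10) ^ (exp_s m - snd \<alpha>)) = t ^ monomial_weight m"
    unfolding weight_def monomial_weight_def
    by (simp add: power_add[symmetric] power_mult[symmetric] algebra_simps)
  then show ?thesis
    unfolding Phi_deriv_def by (simp add: algebra_simps)
next
  case False
  then have "falling_fact (exp_r m) (fst \<alpha>) = 0 \<or> falling_fact (exp_s m) (snd \<alpha>) = 0"
    by (auto intro: falling_fact_eq_0)
  then show ?thesis
    unfolding Phi_deriv_def by auto
qed

text \<open>The matrix deriv_gram \<alpha> u (t, t ^ 10) with row k divided by t ^ weight (\<alpha> k) and column j by
  t ^ monomial_weight (\<sigma> j). When u j has its leading entry at \<sigma> j, all exponents of t are
  nonnegative and only the leading entries survive at t = 0.\<close>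

definition curve_gram :: "('n \<Rightarrow> nat \<times> nat) \<Rightarrow> ('n \<Rightarrow> real^9) \<Rightarrow> ('n \<Rightarrow> 9) \<Rightarrow> real \<Rightarrow> real^'n^'n" where
  "curve_gram \<alpha> u \<sigma> t = (\<chi> k j. \<Sum>m\<in>UNIV.
      t ^ (monomial_weight m - monomial_weight (\<sigma> j)) * (Phi_deriv (\<alpha> k) (1, 1) $ m * u j $ m))"

lemma deriv_gram_on_curve_entry:
  assumes "\<And>j. leading_at monomial_weight (\<sigma> j) (u j)"
  shows "t ^ weight (\<alpha> k) * deriv_gram \<alpha> u (t, t ^ 10) $ k $ j
    = t ^ monomial_weight (\<sigma> j) * curve_gram \<alpha> u \<sigma> t $ k $ j"
proof -
  have rescale: "t ^ monomial_weight m * (Phi_deriv (\<alpha> k) (1, 1) $ m * u j $ m)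
      = t ^ monomial_weight (\<sigma> j) *
        (t ^ (monomial_weight m - monomial_weight (\<sigma> j)) * (Phi_deriv (\<alpha> k) (1, 1) $ m * u j $ m))"
    for m
  proof (cases "monomial_weight m < monomial_weight (\<sigma> j)")
    case True
    then show ?thesis using assms[of j] by (simp add: leading_at_def)
  next
    case False
    then show ?thesis by (simp add: power_add[symmetric] mult.assoc[symmetric])
  qed
  have "(\<Sum>m\<in>UNIV. t ^ monomial_weight m * (Phi_deriv (\<alpha> k) (1, 1) $ m * u j $ m))
      = t ^ monomial_weight (\<sigma> j) * curve_gram \<alpha> u \<sigma> t $ k $ j"
    unfolding curve_gram_def sum_distrib_left vec_lambda_beta by (rule sum.cong[OF refl rescale])
  moreover have "t ^ weight (\<alpha> k) * deriv_gram \<alpha> u (t, t ^ 10) $ k $ j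
      = (\<Sum>m\<in>UNIV. t ^ monomial_weight m * (Phi_deriv (\<alpha> k) (1, 1) $ m * u j $ m))"
    unfolding deriv_gram_def inner_vec_def
    by (simp add: sum_distrib_left mult.assoc[symmetric] Phi_deriv_on_curve)
  ultimately show ?thesis by simp
qed

lemma det_deriv_gram_on_curve:
  fixes \<alpha> :: "'n::finite \<Rightarrow> nat \<times> nat"
  assumes "\<And>j. leading_at monomial_weight (\<sigma> j) (u j)"
  shows "(\<Prod>k\<in>UNIV. t ^ weight (\<alpha> k)) * det (deriv_gram \<alpha> u (t, t ^ 10))
    = (\<Prod>j\<in>UNIV. t ^ monomial_weight (\<sigma> j)) * det (curve_gram \<alpha> u \<sigma> t)"
proof -
  let ?G = "deriv_gram \<alpha> u (t, t ^ 10)" and ?H = "curve_gram \<alpha> u \<sigma> t"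
  have "(\<Prod>k\<in>UNIV. t ^ weight (\<alpha> k)) * det ?G = det (\<chi> k. t ^ weight (\<alpha> k) *s ?G $ k)"
    by (simp add: det_rows_mul)
  also have "(\<chi> k. t ^ weight (\<alpha> k) *s ?G $ k)
      = transpose (\<chi> j. t ^ monomial_weight (\<sigma> j) *s transpose ?H $ j)"
    unfolding vec_eq_iff transpose_def using deriv_gram_on_curve_entry[where \<sigma>=\<sigma> and u=u, OF assms] by simp
  also have "det \<dots> = (\<Prod>j\<in>UNIV. t ^ monomial_weight (\<sigma> j)) * det (transpose ?H)"
    by (simp only: det_transpose det_rows_mul vec_lambda_eta)
  finally show ?thesis by simp
qed

lemma curve_gram_at_0:
  assumes "\<And>j. leading_at monomial_weight (\<sigma> j) (u j)"
  shows "curve_gram \<alpha> u \<sigma> 0 = (\<chi> k j. Phi_deriv (\<alpha> k) (1, 1) $ \<sigma> j)"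
proof -
  have "0 ^ (monomial_weight m - monomial_weight (\<sigma> j)) * (Phi_deriv (\<alpha> k) (1, 1) $ m * u j $ m)
      = (if m = \<sigma> j then Phi_deriv (\<alpha> k) (1, 1) $ m else 0)" for k j m
  proof (cases "m = \<sigma> j")
    case False
    then have "monomial_weight m \<noteq> monomial_weight (\<sigma> j)"
      using inj_monomial_weight by (auto dest: injD)
    then show ?thesis
      using False assms[of j] by (cases "monomial_weight m < monomial_weight (\<sigma> j)") (auto simp: leading_at_def)
  qed (use assms in \<open>simp add: leading_at_def\<close>)
  then show ?thesis
    by (simp add: curve_gram_def vec_eq_iff)
qed

lemma det_deriv_gram_nonzero_somewhere:
  fixes \<alpha> :: "'n::finite \<Rightarrow> nat \<times> nat"
  assumes "\<And>j. leading_at monomial_weight (\<sigma> j) (u j)"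
    and "det (\<chi> k j. Phi_deriv (\<alpha> k) (1, 1) $ \<sigma> j) \<noteq> 0"
  obtains a b where "det (deriv_gram \<alpha> u (a, b)) \<noteq> 0"
proof -
  have "((\<lambda>t. det (curve_gram \<alpha> u \<sigma> t)) \<longlongrightarrow> det (curve_gram \<alpha> u \<sigma> 0)) (at_right 0)"
    unfolding det_def curve_gram_def by (simp, intro tendsto_intros)
  moreover have "det (curve_gram \<alpha> u \<sigma> 0) \<noteq> 0"
    using assms(2) curve_gram_at_0[where \<sigma>=\<sigma> and u=u, OF assms(1)] by simp
  ultimately have "\<forall>\<^sub>F t in at_right 0. det (curve_gram \<alpha> u \<sigma> t) \<noteq> 0"
    by (rule tendsto_imp_eventually_ne)
  then have "\<forall>\<^sub>F t in at_right (0::real). det (curve_gram \<alpha> u \<sigma> t) \<noteq> 0 \<and> 0 < t"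
    by (simp add: eventually_conj eventually_at_right_less)
  then obtain t :: real where "det (curve_gram \<alpha> u \<sigma> t) \<noteq> 0" "0 < t"
    using eventually_happens trivial_limit_at_right_real by blast
  then have "det (deriv_gram \<alpha> u (t, t ^ 10)) \<noteq> 0"
    using det_deriv_gram_on_curve[where \<sigma>=\<sigma> and u=u and \<alpha>=\<alpha> and t=t, OF assms(1)] by auto
  then show ?thesis using that by blast
qed

lemma bipoly_Phi_deriv: "bipoly 6 (\<lambda>a b. Phi_deriv \<alpha> (a, b) $ m)"
proof -
  have "bipoly (0 + 1 * (exp_r m - fst \<alpha>) + 1 * (exp_s m - snd \<alpha>))
     (\<lambda>a b. falling_fact (exp_r m) (fst \<alpha>) * falling_fact (exp_s m) (snd \<alpha>)
        * a ^ (exp_r m - fst \<alpha>) * b ^ (exp_s m - snd \<alpha>))"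
    by (intro bipoly_mult bipoly_const bipoly_power bipoly_fst bipoly_snd)
  moreover have "0 + 1 * (exp_r m - fst \<alpha>) + 1 * (exp_s m - snd \<alpha>) \<le> 6"
    using exp_r_le_3[of m] exp_s_le_3[of m] by simp
  ultimately show ?thesis
    unfolding Phi_deriv_def by (simp add: bipoly_mono)
qed

lemma bipoly_det_deriv_gram:
  fixes \<alpha> :: "'n::finite \<Rightarrow> nat \<times> nat"
  shows "bipoly (6 * CARD('n)) (\<lambda>a b. det (deriv_gram \<alpha> u (a, b)))"
proof -
  have entry: "bipoly 6 (\<lambda>a b. deriv_gram \<alpha> u (a, b) $ k $ j)" for k j
  proof -
    have "bipoly 6 (\<lambda>a b. \<Sum>m\<in>UNIV. Phi_deriv (\<alpha> k) (a, b) $ m * u j $ m)"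
      by (rule bipoly_sum) (use bipoly_mult[OF bipoly_Phi_deriv bipoly_const] in auto)
    then show ?thesis unfolding deriv_gram_def inner_vec_def by simp
  qed
  have "bipoly (0 + 6 * CARD('n))
      (\<lambda>a b. of_int (sign \<pi>) * (\<Prod>i\<in>UNIV. deriv_gram \<alpha> u (a, b) $ i $ \<pi> i))" for \<pi> :: "'n \<Rightarrow> 'n"
    by (intro bipoly_mult bipoly_const bipoly_prod entry) simp
  then show ?thesis
    unfolding det_def by (intro bipoly_sum) (simp_all add: finite_permutations)
qed

text \<open>Phi_deriv \<alpha> (1, 1) $ m is the coefficient of the monomial m in \<partial>^\<alpha> \<Phi>.\<close>

definition nonsingular_selection :: "('n::finite \<Rightarrow> nat \<times> nat) \<Rightarrow> nat \<Rightarrow> nat \<Rightarrow> bool" where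
  "nonsingular_selection \<alpha> t \<rho> \<longleftrightarrow> (\<forall>L. t \<le> card L \<longrightarrow>
     (\<exists>\<sigma>. det (\<chi> k j. Phi_deriv (\<alpha> k) (1, 1) $ \<sigma> j) \<noteq> 0 \<and> \<rho> \<le> card {j. \<sigma> j \<in> L}))"

lemma card_small_projections_less:
  fixes \<alpha> :: "'n::finite \<Rightarrow> nat \<times> nat"
  assumes tr: "transverse M \<nu> (\<lambda>j. {p j})" and "\<nu> > 0" and V: "subspace V"
    and "CARD('n) \<le> 8" and "nonsingular_selection \<alpha> t \<rho>" and "t \<le> dim V"
  shows "card {j. j < M \<and> dim (orth_proj (deriv_span \<alpha> (p j)) ` V) < \<rho>} < nat \<lceil>real M / 100\<rceil>"
proof -
  let ?L = "leads monomial_weight V"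
  have "t \<le> card ?L"
    using dim_le_card_leads[OF inj_monomial_weight V] assms(6) by simp
  then obtain \<sigma> where \<sigma>: "det (\<chi> k j. Phi_deriv (\<alpha> k) (1, 1) $ \<sigma> j) \<noteq> 0" "\<rho> \<le> card {j. \<sigma> j \<in> ?L}"
    using assms(5) unfolding nonsingular_selection_def by blast
  obtain u where u_lead: "\<And>j. leading_at monomial_weight (\<sigma> j) (u j)"
    and u_V: "\<And>j. \<sigma> j \<in> ?L \<Longrightarrow> u j \<in> V"
    by (rule leading_family_exists[where \<sigma> = \<sigma> and w = monomial_weight and V = V]) blast
  obtain a0 b0 where "det (deriv_gram \<alpha> u (a0, b0)) \<noteq> 0"
    using det_deriv_gram_nonzero_somewhere[where \<sigma>=\<sigma> and u=u, OF u_lead \<sigma>(1)] by blast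
  moreover have "2 * (6 * CARD('n)) \<le> 100"
    using assms(4) by simp
  ultimately have zeros: "card {j. j < M \<and> det (deriv_gram \<alpha> u (p j)) = 0} < nat \<lceil>real M / 100\<rceil>"
    using transverse_card_zeros_less[OF tr \<open>\<nu> > 0\<close> bipoly_det_deriv_gram] by simp
  have good: "\<rho> \<le> dim (orth_proj (deriv_span \<alpha> q) ` V)" if "det (deriv_gram \<alpha> u q) \<noteq> 0" for q
  proof -
    have "card {j. \<sigma> j \<in> ?L} \<le> dim (deriv_map \<alpha> q ` V)"
      by (rule card_le_dim_deriv_map_image[OF that _ V]) (simp add: u_V)
    then show ?thesis
      using \<sigma>(2) dim_deriv_map_image_le[of \<alpha> q V] by linarith
  qed
  have "{j. j < M \<and> dim (orth_proj (deriv_span \<alpha> (p j)) ` V) < \<rho>}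
      \<subseteq> {j. j < M \<and> det (deriv_gram \<alpha> u (p j)) = 0}"
  proof
    fix j
    assume "j \<in> {j. j < M \<and> dim (orth_proj (deriv_span \<alpha> (p j)) ` V) < \<rho>}"
    then have "j < M" "\<not> \<rho> \<le> dim (orth_proj (deriv_span \<alpha> (p j)) ` V)"
      by auto
    then show "j \<in> {j. j < M \<and> det (deriv_gram \<alpha> u (p j)) = 0}"
      using good[of "p j"] by blast
  qed
  then have "card {j. j < M \<and> dim (orth_proj (deriv_span \<alpha> (p j)) ` V) < \<rho>}
      \<le> card {j. j < M \<and> det (deriv_gram \<alpha> u (p j)) = 0}"
    by (rule card_mono[rotated]) simp
  with zeros show ?thesis by linarith
qed

lemma sum_ge_if_few_small:
  fixes f :: "nat \<Rightarrow> nat"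
  assumes "card {j. j < M \<and> f j < \<rho>} < nat \<lceil>real M / 100\<rceil>"
  shows "real \<rho> * (real M - real M / 100) \<le> (\<Sum>j<M. real (f j))"
proof -
  let ?B = "{j. j < M \<and> f j < \<rho>}"
  have "real (card ?B) \<le> real M / 100"
    using assms by linarith
  moreover have "card ?B \<le> M"
    using card_mono[of "{..<M}" ?B] by auto
  moreover have "card ({..<M} - ?B) = M - card ?B"
    by (subst card_Diff_subset) auto
  moreover have "(\<Sum>j<M. if j \<in> ?B then 0 else real \<rho>) \<le> (\<Sum>j<M. real (f j))"
    by (intro sum_mono) auto
  moreover have "(\<Sum>j<M. if j \<in> ?B then 0 else real \<rho>) = real \<rho> * real (card ({..<M} - ?B))"
    by (simp add: sum.If_cases Diff_eq, rule disjI2, rule arg_cong[where f=card], auto)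
  ultimately have "real \<rho> * (real M - real (card ?B)) \<le> (\<Sum>j<M. real (f j))"
    by simp
  moreover have "real \<rho> * (real M - real M / 100) \<le> real \<rho> * (real M - real (card ?B))"
    using \<open>real (card ?B) \<le> real M / 100\<close> by (intro mult_left_mono) auto
  ultimately show ?thesis by linarith
qed

lemma card_le_dim_orth_proj_UNIV:
  fixes \<alpha> :: "'n::finite \<Rightarrow> nat \<times> nat"
  assumes "surj (deriv_map \<alpha> q)"
  shows "CARD('n) \<le> dim (orth_proj (deriv_span \<alpha> q) ` UNIV)"
  using dim_deriv_map_image_le[of \<alpha> q UNIV] assms by (simp add: dim_UNIV)

lemma dim_le_average_projection_dim:
  fixes \<alpha> :: "'n::finite \<Rightarrow> nat \<times> nat"
  assumes tr: "transverse M \<nu> (\<lambda>j. {p j})" and "\<nu> > 0" and V: "subspace V"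
    and "0 < M" and "CARD('n) \<le> 8" and "\<And>q. surj (deriv_map \<alpha> q)"
    and selections: "\<And>k. 0 < k \<Longrightarrow> k < 9 \<Longrightarrow>
      \<exists>t \<rho>. t \<le> k \<and> 100 * CARD('n) * k \<le> 891 * \<rho> \<and> nonsingular_selection \<alpha> t \<rho>"
  shows "real (dim V) \<le> 9 / (real CARD('n) * real M) *
    (\<Sum>j<M. real (dim (orth_proj (deriv_span \<alpha> (p j)) ` V)))"
    (is "_ \<le> 9 / ?d * ?S")
proof -
  have "dim V \<le> 9"
    using dim_subset_UNIV[of V] by simp
  have "?d > 0" using \<open>0 < M\<close> by simp
  then consider "dim V = 0" | "dim V = 9" | "0 < dim V" "dim V < 9"
    using \<open>dim V \<le> 9\<close> by linarith
  then show ?thesis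
  proof cases
    case 1
    have "0 \<le> 9 / ?d * ?S"
      using \<open>?d > 0\<close> by (simp add: sum_nonneg)
    then show ?thesis by (simp only: 1 of_nat_0)
  next
    case 2
    then have "span V = UNIV"
      using dim_eq_full[of V] by simp
    then have "V = UNIV"
      using span_eq_iff[of V] V by simp
    then have "(\<Sum>j<M. real CARD('n)) \<le> ?S"
      using card_le_dim_orth_proj_UNIV[OF assms(6)] by (intro sum_mono) simp
    then show ?thesis
      using 2 \<open>?d > 0\<close> by (simp add: pos_le_divide_eq mult.commute)
  next
    case 3
    then obtain t \<rho> where t\<rho>: "t \<le> dim V" "100 * CARD('n) * dim V \<le> 891 * \<rho>"
      "nonsingular_selection \<alpha> t \<rho>"
      using selections by blast
    have "real \<rho> * (real M - real M / 100) \<le> ?S"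
      by (rule sum_ge_if_few_small, rule card_small_projections_less[OF tr \<open>\<nu> > 0\<close> V assms(5) t\<rho>(3,1)])
    moreover have "real (100 * CARD('n) * dim V) * real M \<le> real (891 * \<rho>) * real M"
      using t\<rho>(2) by (intro mult_right_mono) (simp_all only: of_nat_le_iff)
    ultimately have "real (dim V) * ?d \<le> 9 * ?S"
      by (simp add: algebra_simps)
    then show ?thesis
      using \<open>?d > 0\<close> by (simp add: pos_le_divide_eq mult.commute)
  qed
qed

definition coord :: "nat \<Rightarrow> 9" where
  "coord s = [1, 2, 3, 4, 5, 6, 7, 8, 9] ! s"

lemma bij_betw_coord: "bij_betw coord {..<9} UNIV"
proof -
  have "{..<9::nat} = {0, 1, 2, 3, 4, 5, 6, 7, 8}" by auto
  then have "coord ` {..<9} = UNIV"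
    unfolding coord_def using UNIV_9 by simp
  then show ?thesis
    by (simp add: bij_betw_def eq_card_imp_inj_on)
qed

definition coeff_column :: "('n \<Rightarrow> nat \<times> nat) \<Rightarrow> 9 \<Rightarrow> real^'n" where
  "coeff_column \<alpha> l = (\<chi> k. Phi_deriv (\<alpha> k) (1, 1) $ l)"

text \<open>The integer table T stores T ! s ! a =
  \<langle>y a, coeff_column \<alpha> (coord s)\<rangle> for test vectors y a. If T ! s ! a \<noteq> 0 for the first pair
  (s, a) of a list cs, while T ! s' ! a = 0 for all later pairs (s', _), back substitution shows
  that the columns coeff_column \<alpha> (coord s) along cs are linearly independent.\<close>

fun triangular_cert :: "int list list \<Rightarrow> (nat \<times> nat) list \<Rightarrow> bool" where
  "triangular_cert T [] = True"
| "triangular_cert T (sa # cs) \<longleftrightarrow> T ! fst sa ! snd sa \<noteq> 0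
    \<and> list_all (\<lambda>sb. T ! fst sb ! snd sa = 0) cs \<and> triangular_cert T cs"

definition valid_cert :: "int list list \<Rightarrow> nat \<Rightarrow> nat \<Rightarrow> (nat \<times> nat) list \<Rightarrow> bool" where
  "valid_cert T n nY cs \<longleftrightarrow> length cs = n \<and> list_all (\<lambda>sa. fst sa < 9 \<and> snd sa < nY) cs
    \<and> triangular_cert T cs"

definition covers :: "int list list \<Rightarrow> nat \<Rightarrow> nat \<Rightarrow> nat \<Rightarrow> nat \<Rightarrow> (nat \<times> nat) list list \<Rightarrow> bool" where
  "covers T n nY t \<rho> CS \<longleftrightarrow> list_all (valid_cert T n nY) CS \<and>
     list_all (\<lambda>xs. length xs = t \<longrightarrow>
       list_ex (\<lambda>cs. \<rho> \<le> length (filter (\<lambda>sa. fst sa \<in> set xs) cs)) CS) (subseqs [0..<9])"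

lemma triangular_cert_coeffs_zero:
  fixes y x :: "nat \<Rightarrow> real^'n"
  assumes table: "\<And>s a. s < 9 \<Longrightarrow> a < nY \<Longrightarrow> real_of_int (T ! s ! a) = y a \<bullet> x s"
    and "triangular_cert T cs" "list_all (\<lambda>sa. fst sa < 9 \<and> snd sa < nY) cs"
    and "(\<Sum>i<length cs. c i *\<^sub>R x (fst (cs ! i))) = 0" "i < length cs"
  shows "c i = 0"
  using assms(2-)
proof (induct cs arbitrary: c i)
  case (Cons sa cs)
  obtain s a where sa: "sa = (s, a)" by force
  have sum: "c 0 *\<^sub>R x s + (\<Sum>i<length cs. c (Suc i) *\<^sub>R x (fst (cs ! i))) = 0"
    using Cons.prems(3) by (simp add: sa sum.lessThan_Suc_shift del: sum.lessThan_Suc)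
  have bounds: "s < 9" "a < nY" "list_all (\<lambda>sa. fst sa < 9 \<and> snd sa < nY) cs"
    using Cons.prems(2) sa by auto
  have tri: "T ! s ! a \<noteq> 0" "list_all (\<lambda>sb. T ! fst sb ! a = 0) cs" "triangular_cert T cs"
    using Cons.prems(1) sa by auto
  have "y a \<bullet> x (fst (cs ! i)) = 0" if "i < length cs" for i
    using table[of "fst (cs ! i)" a] tri(2) bounds that by (simp add: list_all_length)
  then have "y a \<bullet> (c 0 *\<^sub>R x s + (\<Sum>i<length cs. c (Suc i) *\<^sub>R x (fst (cs ! i)))) = c 0 * (y a \<bullet> x s)"
    by (simp add: inner_add_right inner_sum_right)
  moreover have "y a \<bullet> x s \<noteq> 0"
    using table[OF bounds(1,2)] tri(1) by simp
  ultimately have c0: "c 0 = 0"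
    using sum by simp
  show ?case
  proof (cases i)
    case (Suc i')
    then show ?thesis
      using Cons.hyps[of "\<lambda>i. c (Suc i)" i'] Cons.prems(4) sum c0 tri(3) bounds(3) by simp
  qed (simp add: c0)
qed simp

lemma valid_cert_imp_nonsingular:
  fixes \<alpha> :: "'n::finite \<Rightarrow> nat \<times> nat" and y :: "nat \<Rightarrow> real^'n"
  assumes table: "\<And>s a. s < 9 \<Longrightarrow> a < nY \<Longrightarrow> real_of_int (T ! s ! a) = y a \<bullet> coeff_column \<alpha> (coord s)"
    and cert: "valid_cert T CARD('n) nY cs"
  obtains \<sigma> where "det (\<chi> k j. Phi_deriv (\<alpha> k) (1, 1) $ \<sigma> j) \<noteq> 0"
    "card {i. i < length cs \<and> coord (fst (cs ! i)) \<in> L} \<le> card {j. \<sigma> j \<in> L}"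
proof -
  have len: "length cs = CARD('n)"
    using cert unfolding valid_cert_def by simp
  obtain h :: "nat \<Rightarrow> 'n" where h: "bij_betw h {..<CARD('n)} UNIV"
    using ex_bij_betw_nat_finite[of "UNIV :: 'n set"] by (auto simp: atLeast0LessThan)
  define \<sigma> where "\<sigma> j = coord (fst (cs ! inv_into {..<CARD('n)} h j))" for j
  have \<sigma>_h: "\<sigma> (h i) = coord (fst (cs ! i))" if "i < CARD('n)" for i
    using h that unfolding \<sigma>_def bij_betw_def by (simp add: inv_into_f_f)
  let ?A = "(\<chi> k j. Phi_deriv (\<alpha> k) (1, 1) $ \<sigma> j) :: real^'n^'n"
  have "x = 0" if "?A *v x = 0" for x
  proof -
    have "?A *v x = (\<Sum>j\<in>UNIV. (x $ j) *\<^sub>R coeff_column \<alpha> (\<sigma> j))"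
      by (simp add: vec_eq_iff matrix_vector_mult_def coeff_column_def sum_component mult.commute)
    also have "\<dots> = (\<Sum>i\<in>{..<CARD('n)}. (x $ h i) *\<^sub>R coeff_column \<alpha> (\<sigma> (h i)))"
      by (rule sum.reindex_bij_betw[OF h, symmetric])
    also have "\<dots> = (\<Sum>i<length cs. (x $ h i) *\<^sub>R coeff_column \<alpha> (coord (fst (cs ! i))))"
      unfolding len by (intro sum.cong) (simp_all add: \<sigma>_h)
    finally have combination: "(\<Sum>i<length cs. (x $ h i) *\<^sub>R coeff_column \<alpha> (coord (fst (cs ! i)))) = 0"
      using that by simp
    have "x $ h i = 0" if "i < CARD('n)" for i
      using triangular_cert_coeffs_zero[where x="\<lambda>s. coeff_column \<alpha> (coord s)", OF table _ _ combination]
        cert that len by (simp add: valid_cert_def)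
    moreover have "\<exists>i<CARD('n). j = h i" for j
      using h unfolding bij_betw_def by (metis UNIV_I imageE lessThan_iff)
    ultimately show ?thesis
      by (metis vec_eq_iff zero_index)
  qed
  then have "invertible ?A"
    unfolding invertible_left_inverse matrix_left_invertible_ker by blast
  then have "det ?A \<noteq> 0"
    by (simp add: invertible_det_nz)
  moreover have "card {i. i < length cs \<and> coord (fst (cs ! i)) \<in> L} \<le> card {j. \<sigma> j \<in> L}"
  proof -
    let ?S = "{i. i < length cs \<and> coord (fst (cs ! i)) \<in> L}"
    have "inj_on h ?S"
      by (rule inj_on_subset[OF bij_betw_imp_inj_on[OF h]]) (auto simp: len)
    moreover have "h ` ?S \<subseteq> {j. \<sigma> j \<in> L}"
      using \<sigma>_h len by auto
    ultimately show ?thesis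
      using card_inj_on_le[of h ?S "{j. \<sigma> j \<in> L}"] by simp
  qed
  ultimately show ?thesis using that by blast
qed

lemma covers_imp_nonsingular_selection:
  fixes \<alpha> :: "'n::finite \<Rightarrow> nat \<times> nat" and y :: "nat \<Rightarrow> real^'n"
  assumes table: "\<And>s a. s < 9 \<Longrightarrow> a < nY \<Longrightarrow> real_of_int (T ! s ! a) = y a \<bullet> coeff_column \<alpha> (coord s)"
    and "covers T CARD('n) nY t \<rho> CS"
  shows "nonsingular_selection \<alpha> t \<rho>"
  unfolding nonsingular_selection_def
proof (intro allI impI)
  fix L :: "9 set"
  assume "t \<le> card L"
  define L' where "L' = {s. s < 9 \<and> coord s \<in> L}"
  have "L = coord ` L'"
    using bij_betw_coord unfolding L'_def bij_betw_def by auto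
  moreover have "inj_on coord L'"
    using bij_betw_coord unfolding L'_def bij_betw_def by (rule inj_on_subset[OF conjunct1]) auto
  ultimately have "t \<le> card L'"
    using \<open>t \<le> card L\<close> by (simp add: card_image)
  then obtain L0 where L0: "L0 \<subseteq> L'" "card L0 = t"
    by (meson obtain_subset_with_card_n)
  then have "L0 \<subseteq> set [0..<9]"
    unfolding L'_def by auto
  then obtain xs where xs: "xs \<in> set (subseqs [0..<9])" "set xs = L0"
    using subset_subseqs by blast
  then have "length xs = t"
    using L0(2) subseqs_distinctD[OF xs(1)] distinct_card by (metis distinct_upt)
  then obtain cs where cs: "cs \<in> set CS" "\<rho> \<le> length (filter (\<lambda>sa. fst sa \<in> set xs) cs)"
    using assms(2) xs(1) unfolding covers_def list_all_iff list_ex_iff by blast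
  then obtain \<sigma> where \<sigma>: "det (\<chi> k j. Phi_deriv (\<alpha> k) (1, 1) $ \<sigma> j) \<noteq> 0"
    "card {i. i < length cs \<and> coord (fst (cs ! i)) \<in> L} \<le> card {j. \<sigma> j \<in> L}"
    using valid_cert_imp_nonsingular[OF table] assms(2) unfolding covers_def list_all_iff by blast
  have "\<rho> \<le> card {i. i < length cs \<and> fst (cs ! i) \<in> set xs}"
    using cs(2) by (simp add: length_filter_conv_card)
  also have "\<dots> \<le> card {i. i < length cs \<and> coord (fst (cs ! i)) \<in> L}"
    using xs(2) L0(1) unfolding L'_def by (intro card_mono) auto
  finally show "\<exists>\<sigma>. det (\<chi> k j. Phi_deriv (\<alpha> k) (1, 1) $ \<sigma> j) \<noteq> 0 \<and> \<rho> \<le> card {j. \<sigma> j \<in> L}"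
    using \<sigma> by (intro exI[of _ \<sigma>]) simp
qed

definition ords1 :: "2 \<Rightarrow> nat \<times> nat" where
  "ords1 k = (if k = 1 then (1, 0) else (0, 1))"

definition ords2 :: "5 \<Rightarrow> nat \<times> nat" where
  "ords2 k = (if k = 1 then (1, 0) else if k = 2 then (0, 1) else if k = 3 then (2, 0)
    else if k = 4 then (1, 1) else (0, 2))"

lemma W1_eq_deriv_span: "W1 (fst q) (snd q) = deriv_span ords1 q"
proof -
  have "range (\<lambda>k. Phi_deriv (ords1 k) q) = {Phi_deriv (1, 0) q, Phi_deriv (0, 1) q}"
    unfolding UNIV_2 by (simp add: ords1_def)
  then show ?thesis
    unfolding W1_def deriv_span_def Phi_r_eq_Phi_deriv Phi_s_eq_Phi_deriv by simp
qed

lemma W2_eq_deriv_span: "W2 (fst q) (snd q) = deriv_span ords2 q"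
proof -
  have "range (\<lambda>k. Phi_deriv (ords2 k) q) = {Phi_deriv (1, 0) q, Phi_deriv (0, 1) q,
      Phi_deriv (2, 0) q, Phi_deriv (1, 1) q, Phi_deriv (0, 2) q}"
    unfolding UNIV_5 by (simp add: ords2_def distinct_5)
  then show ?thesis
    unfolding W2_def deriv_span_def Phi_r_eq_Phi_deriv Phi_s_eq_Phi_deriv Phi_rr_eq_Phi_deriv
      Phi_rs_eq_Phi_deriv Phi_ss_eq_Phi_deriv by simp
qed

lemma surj_deriv_map_ords1: "surj (deriv_map ords1 q)"
proof -
  obtain a b where q: "q = (a, b)" by force
  have "deriv_map ords1 q (y $ 1 *\<^sub>R axis 1 1 + y $ 2 *\<^sub>R axis 2 1) $ k = y $ k" for y k
    using exhaust_2[of k] unfolding deriv_map_def q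
    by (elim disjE) (simp_all add: ords1_def inner_add_right inner_axis Phi_deriv_def exp_r_simps
        exp_s_simps)
  then have "deriv_map ords1 q (y $ 1 *\<^sub>R axis 1 1 + y $ 2 *\<^sub>R axis 2 1) = y" for y
    by (simp add: vec_eq_iff)
  then show ?thesis
    by (metis surjI surj_def)
qed

lemma surj_deriv_map_ords2: "surj (deriv_map ords2 q)"
proof -
  obtain a b where q: "q = (a, b)" by force
  define v where "v y = (y $ 1 - a * y $ 3 - b * y $ 4) *\<^sub>R axis 1 1
      + (y $ 2 - a * y $ 4 - b * y $ 5) *\<^sub>R axis 2 1 + (y $ 3 / 2) *\<^sub>R axis 3 1
      + y $ 4 *\<^sub>R axis 4 1 + (y $ 5 / 2) *\<^sub>R axis (5::9) (1::real)" for y :: "real^5"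
  have "deriv_map ords2 q (v y) $ k = y $ k" for y k
    using exhaust_5[of k] unfolding deriv_map_def q v_def
    by (elim disjE) (simp_all add: ords2_def distinct_5 inner_add_right inner_axis Phi_deriv_def
        exp_r_simps exp_s_simps numeral_2_eq_2 algebra_simps)
  then have "deriv_map ords2 q (v y) = y" for y
    by (simp add: vec_eq_iff)
  then show ?thesis
    by (metis surjI surj_def)
qed

definition test1 :: "nat \<Rightarrow> real^2" where
  "test1 a = (if a = 0 then axis 1 1 else axis 2 1)"

definition test2 :: "nat \<Rightarrow> real^5" where
  "test2 a = (if a = 0 then axis 1 1 else if a = 1 then axis 2 1 else if a = 2 then axis 3 1
    else if a = 3 then axis 4 1 else if a = 4 then axis 5 1 else vector [1, -2, -1, -2, 1])"

definition table1 :: "int list list" where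
  "table1 = [[1, 0], [0, 1], [2, 0], [1, 1], [0, 2], [3, 0], [2, 1], [1, 2], [0, 3]]"

definition table2 :: "int list list" where
  "table2 = [[1, 0, 0, 0, 0, 1], [0, 1, 0, 0, 0, -2], [2, 0, 2, 0, 0, 0], [1, 1, 0, 1, 0, -3],
    [0, 2, 0, 0, 2, -2], [3, 0, 6, 0, 0, -3], [2, 1, 2, 2, 0, -6], [1, 2, 0, 2, 2, -5],
    [0, 3, 0, 0, 6, 0]]"

definition certs1 :: "(nat \<times> nat) list list" where
  "certs1 = [[(0, 0), (1, 1)], [(3, 1), (2, 0)], [(4, 1), (5, 0)], [(6, 0), (8, 1)],
    [(7, 1), (0, 0)], [(7, 0), (1, 1)]]"

definition certs2 :: "(nat \<times> nat) list list" where
  "certs2 = [[(2, 2), (3, 3), (0, 0), (4, 4), (1, 1)], [(7, 4), (6, 3), (1, 1), (5, 2), (0, 0)],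
    [(2, 2), (3, 3), (0, 0), (1, 5), (8, 1)], [(6, 3), (2, 2), (0, 0), (4, 5), (8, 1)],
    [(3, 3), (8, 4), (1, 1), (5, 5), (2, 0)], [(2, 2), (7, 3), (0, 0), (4, 5), (8, 1)],
    [(6, 2), (7, 4), (3, 3), (0, 0), (1, 1)], [(3, 3), (4, 4), (1, 1), (5, 2), (0, 0)],
    [(5, 2), (7, 3), (0, 0), (4, 5), (8, 1)], [(2, 2), (3, 3), (0, 0), (4, 5), (8, 1)],
    [(7, 4), (6, 3), (1, 1), (5, 5), (2, 0)], [(3, 3), (5, 2), (0, 0), (4, 5), (8, 1)],
    [(4, 4), (6, 2), (3, 3), (0, 0), (1, 1)], [(3, 3), (4, 4), (1, 1), (5, 5), (2, 0)]]"

lemma less_9_cases: "s < 9 \<Longrightarrow> s = 0 \<or> s = 1 \<or> s = 2 \<or> s = 3 \<or> s = 4 \<or> s = 5 \<or> s = 6 \<or> s = 7 \<or> s = 8"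
  for s :: nat
  by auto

lemma table1_eq:
  assumes "s < 9" "a < 2"
  shows "real_of_int (table1 ! s ! a) = test1 a \<bullet> coeff_column ords1 (coord s)"
proof -
  have "a = 0 \<or> a = 1" using assms by auto
  with less_9_cases[OF assms(1)] show ?thesis
    by (elim disjE) (simp_all add: test1_def inner_axis' coeff_column_def ords1_def Phi_deriv_def
        table1_def coord_def exp_r_simps exp_s_simps)
qed

lemma inner_5: "(x::real^5) \<bullet> y = x $ 1 * y $ 1 + x $ 2 * y $ 2 + x $ 3 * y $ 3 + x $ 4 * y $ 4 + x $ 5 * y $ 5"
  unfolding inner_vec_def UNIV_5 by (simp add: distinct_5 add.assoc)

lemma table2_eq:
  assumes "s < 9" "a < 6"
  shows "real_of_int (table2 ! s ! a) = test2 a \<bullet> coeff_column ords2 (coord s)"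
proof -
  have "a = 0 \<or> a = 1 \<or> a = 2 \<or> a = 3 \<or> a = 4 \<or> a = 5" using assms by auto
  with less_9_cases[OF assms(1)] show ?thesis
    by (elim disjE) (simp_all add: test2_def inner_5 coeff_column_def ords2_def Phi_deriv_def
        distinct_5 table2_def coord_def exp_r_simps exp_s_simps numeral_2_eq_2 vector_def axis_def)
qed

lemma covers_certs1:
  "covers table1 2 2 1 1 certs1"
  "covers table1 2 2 5 2 certs1"
  by code_simp+

lemma covers_certs2:
  "covers table2 5 6 1 1 certs2"
  "covers table2 5 6 2 2 certs2"
  "covers table2 5 6 4 3 certs2"
  "covers table2 5 6 6 4 certs2"
  "covers table2 5 6 8 5 certs2"
  by code_simp+

lemma nonsingular_selections_ords1:
  assumes "0 < k" "k < 9"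
  shows "\<exists>t \<rho>. t \<le> k \<and> 100 * CARD(2) * k \<le> 891 * \<rho> \<and> nonsingular_selection ords1 t \<rho>"
proof -
  have "nonsingular_selection ords1 t \<rho>" if "covers table1 2 2 t \<rho> certs1" for t \<rho>
    using covers_imp_nonsingular_selection[OF table1_eq] that by simp
  then have sel: "nonsingular_selection ords1 1 1" "nonsingular_selection ords1 5 2"
    using covers_certs1 by blast+
  consider "k \<le> 4" | "5 \<le> k"
    by linarith
  then show ?thesis
  proof cases
    case 1
    then show ?thesis using sel(1) assms by (intro exI[of _ 1] exI[of _ 1]) simp
  next
    case 2
    then show ?thesis using sel(2) assms by (intro exI[of _ 5] exI[of _ 2]) simp
  qed
qed

lemma nonsingular_selections_ords2:
  assumes "0 < k" "k < 9"
  shows "\<exists>t \<rho>. t \<le> k \<and> 100 * CARD(5) * k \<le> 891 * \<rho> \<and> nonsingular_selection ords2 t \<rho>"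
proof -
  have "nonsingular_selection ords2 t \<rho>" if "covers table2 5 6 t \<rho> certs2" for t \<rho>
    using covers_imp_nonsingular_selection[OF table2_eq] that by simp
  then have sel: "nonsingular_selection ords2 1 1" "nonsingular_selection ords2 2 2"
    "nonsingular_selection ords2 4 3" "nonsingular_selection ords2 6 4" "nonsingular_selection ords2 8 5"
    using covers_certs2 by blast+
  consider "k = 1" | "2 \<le> k" "k \<le> 3" | "4 \<le> k" "k \<le> 5" | "6 \<le> k" "k \<le> 7" | "k = 8"
    using assms by linarith
  then show ?thesis
  proof cases
    case 1
    then show ?thesis using sel(1) by (intro exI[of _ 1] exI[of _ 1]) simp
  next
    case 2
    then show ?thesis using sel(2) by (intro exI[of _ 2] exI[of _ 2]) simp
  next
    case 3
    then show ?thesis using sel(3) by (intro exI[of _ 4] exI[of _ 3]) simp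
  next
    case 4
    then show ?thesis using sel(4) by (intro exI[of _ 6] exI[of _ 4]) simp
  next
    case 5
    then show ?thesis using sel(5) by (intro exI[of _ 8] exI[of _ 5]) simp
  qed
qed

theorem lemma6p2:
  fixes M :: nat and \<nu> :: real and p :: "nat \<Rightarrow> real \<times> real" and V :: "(real^9) set"
  assumes "M \<ge> 1000"
    and "inj_on p {..<M}"
    and "\<forall>j<M. p j \<in> {0..1} \<times> {0..1}"
    and "\<nu> > 0"
    and "transverse M \<nu> (\<lambda>j. {p j})"
    and "subspace V"
  shows "real (dim V) \<le> 9 / (2 * real M) *
            (\<Sum>j<M. real (dim (orth_proj (W1 (fst (p j)) (snd (p j))) ` V)))
       \<and> real (dim V) \<le> 9 / (5 * real M) *
            (\<Sum>j<M. real (dim (orth_proj (W2 (fst (p j)) (snd (p j))) ` V)))"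
proof -
  have "0 < M" using assms(1) by simp
  have "real (dim V) \<le> 9 / (real CARD(2) * real M) *
      (\<Sum>j<M. real (dim (orth_proj (deriv_span ords1 (p j)) ` V)))"
    by (rule dim_le_average_projection_dim[OF assms(5,4,6) \<open>0 < M\<close> _ surj_deriv_map_ords1
          nonsingular_selections_ords1]) simp_all
  moreover have "real (dim V) \<le> 9 / (real CARD(5) * real M) *
      (\<Sum>j<M. real (dim (orth_proj (deriv_span ords2 (p j)) ` V)))"
    by (rule dim_le_average_projection_dim[OF assms(5,4,6) \<open>0 < M\<close> _ surj_deriv_map_ords2
          nonsingular_selections_ords2]) simp_all
  ultimately show ?thesis
    by (simp add: W1_eq_deriv_span W2_eq_deriv_span)
qed

end
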